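(* Let $V$ be a real bounded sequence with $V_n\ge C$ for all $n\ge1$, for some $C>0$, and $n(V_{n+1}-V_n)\in\ell^1$. Let $b_n=V_n+2$, $S_n=\frac12\big(V_n+2+\sqrt{V_n(V_n+4)}\big)$, and let $z_n$, $C_z$, $\phi^\pm$, $\widetilde V$ be as defined below. Then: (a) $S_{n+1}-S_n\in\ell^1$; (b) $V_n$ converges to a nonzero limit $V_\infty$, and the infinite product defining $C_z$ converges to a finite nonzero number, so $C_z$ is well defined; (c) $z_nz_{n+1}=1/\sqrt{V_{n+1}(V_{n+1}+4)}$ and $z_m-[V_\infty(V_\infty+4)]^{-1/4}\in\ell^1$ (as a sequence in $m$); (d) $\lim_{n\to\infty}\widetilde V_n=V_\infty$, and the Green matrix $G_{mn}=\phi^+_{\min(m,n)}\phi^-_{\max(m,n)}$ of $-\Delta+\widetilde V$ and the product $\phi^+_n\phi^-_n$ are uniformly bounded; (e) $\widetilde V_n-V_n\in\ell^1$, and consequently (taking $\widetilde V$ as comparison potential) $(-\Delta+V)\psi=0$ has a solution $\psi^-$ with $\psi^-_n=\phi^-_n+r_n\max_{k\ge n}|\phi^-_k|$, where $r_n\to0$.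
   Context: $(\Delta f)_n=f_{n+1}+f_{n-1}-2f_n$; $(-\Delta+V)\psi=0$ means $-\psi_{n+1}-\psi_{n-1}+(2+V_n)\psi_n=0$. Note $b_n^2-4=V_n(V_n+4)$. Define $C_z:=\big(V_\infty(V_\infty+4)\big)^{-1/4}\prod_{m=1}^\infty\sqrt{\frac{V_{2m}(V_{2m}+4)}{V_{2m-1}(V_{2m-1}+4)}}$ and, for $n\ge1$, $z_n:=C_z^{(-1)^n}\Big(\frac{\prod_{1\le k\le n-1,\,k\equiv n-1\ (\mathrm{mod}\ 2)}(b_k^2-4)}{\prod_{1\le k\le n,\,k\equiv n\ (\mathrm{mod}\ 2)}(b_k^2-4)}\Big)^{1/2}$ (the factor alternates between $C_z$ and $C_z^{-1}$). Set $\phi^\pm_n=z_n\prod_{\ell=1}^nS_\ell^{\pm1}$ and $\widetilde V_n=\frac{z_{n+1}}{z_n}S_{n+1}+\frac{z_{n-1}}{z_nS_n}-2$ (so that $(-\Delta+\widetilde V)\phi^\pm=0$). *)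

theory Defs
  imports "HOL-Analysis.Analysis"
begin

(* The potential V is a sequence indexed by n >= 1; the value V 0 is irrelevant. *)

definition Vinf :: "(nat \<Rightarrow> real) \<Rightarrow> real" where
  "Vinf V = lim V"

definition bb :: "(nat \<Rightarrow> real) \<Rightarrow> nat \<Rightarrow> real" where
  "bb V n = V n + 2"

definition SS :: "(nat \<Rightarrow> real) \<Rightarrow> nat \<Rightarrow> real" where
  "SS V n = (V n + 2 + sqrt (V n * (V n + 4))) / 2"

definition Czfac :: "(nat \<Rightarrow> real) \<Rightarrow> nat \<Rightarrow> real" where
  "Czfac V m = sqrt ((V (2*m) * (V (2*m) + 4)) / (V (2*m - 1) * (V (2*m - 1) + 4)))"

definition Cz :: "(nat \<Rightarrow> real) \<Rightarrow> real" where
  "Cz V = (Vinf V * (Vinf V + 4)) powr (-1/4) * prodinf (\<lambda>m. Czfac V (Suc m))"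

(* z_n; for n = 0 the same formula (empty products) gives z_0 = C_z *)
definition zz :: "(nat \<Rightarrow> real) \<Rightarrow> nat \<Rightarrow> real" where
  "zz V n = (if even n then Cz V else inverse (Cz V)) *
     sqrt ((\<Prod>k\<in>{k. 1 \<le> k \<and> k \<le> n - 1 \<and> k mod 2 = (n - 1) mod 2}. bb V k ^ 2 - 4) /
           (\<Prod>k\<in>{k. 1 \<le> k \<and> k \<le> n \<and> k mod 2 = n mod 2}. bb V k ^ 2 - 4))"

definition phip :: "(nat \<Rightarrow> real) \<Rightarrow> nat \<Rightarrow> real" where
  "phip V n = zz V n * (\<Prod>l=1..n. SS V l)"

definition phim :: "(nat \<Rightarrow> real) \<Rightarrow> nat \<Rightarrow> real" where
  "phim V n = zz V n * (\<Prod>l=1..n. inverse (SS V l))"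

definition Vt :: "(nat \<Rightarrow> real) \<Rightarrow> nat \<Rightarrow> real" where
  "Vt V n = zz V (n + 1) / zz V n * SS V (n + 1) + zz V (n - 1) / (zz V n * SS V n) - 2"

end

theory Submission
  imports Defs
begin

text \<open>Write \<open>D\<^sub>n = V\<^sub>n (V\<^sub>n + 4) = b\<^sub>n\<^sup>2 - 4\<close>. On \<open>V \<ge> C > 0\<close> the maps
  \<open>V \<mapsto> S\<close>, \<open>V \<mapsto> ln D\<close> are Lipschitz, so \<open>S\<close> and \<open>ln D\<close> inherit the summable variation
  of \<open>V\<close>; in particular the factors of \<open>C\<^sub>z\<close> have summable logarithms. The sequence
  \<open>x\<^sub>n = ln (z\<^sub>n / z\<^sub>\<infinity>)\<close> satisfies \<open>x\<^sub>n + x\<^sub>n\<^sub>+\<^sub>1 = (ln D\<^sub>\<infinity> - ln D\<^sub>n\<^sub>+\<^sub>1)/2\<close>,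
  and the choice of \<open>C\<^sub>z\<close> is exactly what makes \<open>x\<^sub>2\<^sub>N \<longrightarrow> 0\<close>; hence \<open>x \<longrightarrow> 0\<close> and
  \<open>|x\<^sub>n|\<close> is bounded by the tail \<open>\<Sum>\<^sub>k\<^sub>\<ge>\<^sub>n |V\<^sub>k\<^sub>+\<^sub>1 - V\<^sub>k|\<close> (up to a constant), whose sum over
  \<open>n\<close> is finite by the weighted hypothesis. This gives \<open>z - z\<^sub>\<infinity> \<in> l\<^sup>1\<close>, and then
  \<open>Vt - V \<in> l\<^sup>1\<close> and the bound on the Green matrix are direct.

  The decaying solution of \<open>(-\<Delta> + V)\<psi> = 0\<close> is \<open>\<psi>\<^sub>n = c \<Prod>\<^sub>l\<^sub>\<le>\<^sub>n t\<^sub>l\<close>, where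
  \<open>t\<^sub>n = 1/(b\<^sub>n - t\<^sub>n\<^sub>+\<^sub>1)\<close> is the limit of a continued fraction. Comparing \<open>t\<^sub>n\<close> with \<open>1/S\<^sub>n\<close>, the
  fixed point of the same contraction with frozen coefficient, gives \<open>t - 1/S \<in> l\<^sup>1\<close>; so
  \<open>\<psi>\<^sub>n / \<phi>\<^sup>-\<^sub>n\<close> converges, and choosing \<open>c\<close> to make the limit \<open>1\<close> yields \<open>r\<^sub>n \<longrightarrow> 0\<close>.\<close>

lemma abs_exp_minus_one_le: "\<bar>exp x - 1\<bar> \<le> exp \<bar>x\<bar> * \<bar>x\<bar>" for x :: real
proof (cases "x \<ge> 0")
  case True
  have "(1 - x) * exp x \<le> exp (- x) * exp x"
    using exp_ge_add_one_self[of "- x"] by (intro mult_right_mono) auto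
  then have "exp x - 1 \<le> exp x * x" by (simp add: exp_minus field_simps)
  with True show ?thesis by simp
next
  case False
  then have "exp x \<le> 1" by simp
  then have "\<bar>exp x - 1\<bar> = 1 - exp x" by simp
  also have "\<dots> \<le> - x" using exp_ge_add_one_self[of x] by linarith
  also have "\<dots> = \<bar>x\<bar>" using False by simp
  also have "\<dots> \<le> exp \<bar>x\<bar> * \<bar>x\<bar>" using mult_right_mono[of 1 "exp \<bar>x\<bar>" "\<bar>x\<bar>"] by simp
  finally show ?thesis .
qed

lemma abs_ln_diff_le:
  fixes m x y :: real
  assumes "0 < m" "m \<le> x" "m \<le> y"
  shows "\<bar>ln x - ln y\<bar> \<le> \<bar>x - y\<bar> / m"
proof -
  have one_side: "ln u - ln v \<le> \<bar>u - v\<bar> / m" if "m \<le> u" "m \<le> v" for u v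
  proof -
    have "ln u - ln v = ln (u / v)" using that assms(1) by (simp add: ln_div)
    also have "\<dots> \<le> u / v - 1" using that assms(1) by (intro ln_le_minus_one) auto
    also have "\<dots> = (u - v) / v" using that assms(1) by (simp add: field_simps)
    also have "\<dots> \<le> \<bar>u - v\<bar> / m" using that assms(1) by (intro frac_le) auto
    finally show ?thesis .
  qed
  show ?thesis
    using one_side[of x y] one_side[of y x] assms by (auto simp: abs_minus_commute)
qed

lemma abs_sqrt_diff_le:
  fixes m x y :: real
  assumes "0 < m" "m \<le> x" "m \<le> y"
  shows "\<bar>sqrt x - sqrt y\<bar> \<le> \<bar>x - y\<bar> / sqrt m"
proof -
  have "sqrt m \<le> sqrt x + sqrt y"
    using assms real_sqrt_le_mono[OF assms(2)] by (simp add: add_increasing2)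
  then have "\<bar>sqrt x - sqrt y\<bar> * sqrt m \<le> \<bar>sqrt x - sqrt y\<bar> * (sqrt x + sqrt y)"
    by (intro mult_left_mono) auto
  also have "\<dots> = \<bar>(sqrt x - sqrt y) * (sqrt x + sqrt y)\<bar>"
    using assms by (simp add: abs_mult)
  also have "\<dots> = \<bar>x - y\<bar>" using assms by (simp add: algebra_simps)
  finally show ?thesis using assms(1) by (simp add: pos_le_divide_eq)
qed

lemma abs_inverse_diff_le:
  fixes m u v :: real
  assumes "0 < m" "m \<le> u" "m \<le> v"
  shows "\<bar>1 / u - 1 / v\<bar> \<le> \<bar>u - v\<bar> / m\<^sup>2"
proof -
  have "\<bar>1 / u - 1 / v\<bar> = \<bar>u - v\<bar> / (u * v)"
    using assms by (simp add: field_simps abs_minus_commute abs_mult)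
  also have "\<dots> \<le> \<bar>u - v\<bar> / m\<^sup>2"
    using assms by (intro divide_left_mono) (auto simp: power2_eq_square intro: mult_mono)
  finally show ?thesis .
qed

lemma summable_abs_reindex_strict_mono:
  fixes f :: "nat \<Rightarrow> real"
  assumes g: "strict_mono g" and f: "summable (\<lambda>n. \<bar>f n\<bar>)"
  shows "summable (\<lambda>n. \<bar>f (g n)\<bar>)"
proof (rule summableI_nonneg_bounded)
  fix N
  have "(\<Sum>n<N. \<bar>f (g n)\<bar>) = (\<Sum>k\<in>g ` {..<N}. \<bar>f k\<bar>)"
    using strict_mono_on_imp_inj_on[of UNIV g] g by (simp add: sum.reindex inj_on_subset)
  also have "\<dots> \<le> (\<Sum>k<g N. \<bar>f k\<bar>)"
    using g by (intro sum_mono2) (auto simp: strict_mono_less)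
  also have "\<dots> \<le> (\<Sum>k. \<bar>f k\<bar>)" using f by (intro sum_le_suminf) auto
  finally show "(\<Sum>n<N. \<bar>f (g n)\<bar>) \<le> (\<Sum>k. \<bar>f k\<bar>)" .
qed auto

lemma LIMSEQ_even_odd:
  fixes X :: "nat \<Rightarrow> 'a::metric_space"
  assumes even: "(\<lambda>n. X (2 * n)) \<longlonglongrightarrow> l" and odd: "(\<lambda>n. X (2 * n + 1)) \<longlonglongrightarrow> l"
  shows "X \<longlonglongrightarrow> l"
proof (rule metric_LIMSEQ_I)
  fix r :: real assume "0 < r"
  obtain N1 where N1: "\<And>n. n \<ge> N1 \<Longrightarrow> dist (X (2 * n)) l < r"
    using metric_LIMSEQ_D[OF even \<open>0 < r\<close>] by blast
  obtain N2 where N2: "\<And>n. n \<ge> N2 \<Longrightarrow> dist (X (2 * n + 1)) l < r"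
    using metric_LIMSEQ_D[OF odd \<open>0 < r\<close>] by blast
  have "dist (X n) l < r" if "n \<ge> 2 * (N1 + N2)" for n
  proof -
    have half: "N1 + N2 \<le> n div 2" using div_le_mono[OF that, of 2] by simp
    show ?thesis
    proof (cases "even n")
      case True
      then show ?thesis using N1[of "n div 2"] half by simp
    next
      case False
      then have "n = 2 * (n div 2) + 1" by simp
      then show ?thesis using N2[of "n div 2"] half by (metis le_add2 le_trans)
    qed
  qed
  then show "\<exists>N. \<forall>n\<ge>N. dist (X n) l < r" by blast
qed

lemma summable_tail_sums:
  fixes f :: "nat \<Rightarrow> real"
  assumes f0: "\<And>n. f n \<ge> 0" and s: "summable (\<lambda>n. real n * f n)"
  shows "summable (\<lambda>n. \<Sum>k. f (k + n))"
proof -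
  have sf: "summable f"
  proof (rule summable_comparison_test'[OF s, of 1])
    fix n :: nat assume "1 \<le> n"
    then show "norm (f n) \<le> real n * f n" using f0[of n] by (simp add: mult_le_cancel_right1)
  qed
  define R where "R n = (\<Sum>k. f (k + n))" for n
  have sR: "summable (\<lambda>k. f (k + n))" for n using sf summable_iff_shift by blast
  have R_Suc: "R n = f n + R (Suc n)" for n
    using suminf_split_head[OF sR[of n]] by (simp add: R_def)
  have R_weighted: "real N * R N \<le> (\<Sum>j. real j * f j)" for N
  proof -
    have "real N * R N = (\<Sum>k. real N * f (k + N))" unfolding R_def using sR by (simp add: suminf_mult)
    also have "\<dots> \<le> (\<Sum>k. real (k + N) * f (k + N))"
      using sR[of N] summable_iff_shift[of "\<lambda>n. real n * f n" N] s f0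
      by (intro suminf_le summable_mult) (auto intro: mult_right_mono)
    also have "\<dots> \<le> (\<Sum>j. real j * f j)"
      using suminf_split_initial_segment[OF s, of N] f0 by (simp add: sum_nonneg)
    finally show ?thesis .
  qed
  \<comment> \<open>Summation by parts: each \<open>f k\<close> with \<open>k < N\<close> occurs \<open>k + 1\<close> times.\<close>
  have by_parts: "(\<Sum>n<N. R n) = (\<Sum>k<N. real k * f k) + (\<Sum>k<N. f k) + real N * R N" for N
  proof (induction N)
    case (Suc N)
    then show ?case using R_Suc[of N] by (simp add: algebra_simps)
  qed simp
  have "(\<Sum>n<N. R n) \<le> 2 * (\<Sum>j. real j * f j) + suminf f" for N
    using by_parts[of N] R_weighted[of N] sum_le_suminf[OF s, of "{..<N}"]
      sum_le_suminf[OF sf, of "{..<N}"] f0 by fastforce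
  moreover have "R n \<ge> 0" for n unfolding R_def using f0 sR by (intro suminf_nonneg) auto
  ultimately have "summable R" by (intro summableI_nonneg_bounded[of R])
  then show ?thesis unfolding R_def .
qed

lemma abs_le_suminf_of_two_step_increments:
  fixes x h :: "nat \<Rightarrow> real"
  assumes h0: "\<And>n. h n \<ge> 0" and sh: "summable h"
    and step: "\<And>n. \<bar>x (n + 2) - x n\<bar> \<le> h n" and lim: "x \<longlonglongrightarrow> 0"
  shows "\<bar>x n\<bar> \<le> (\<Sum>k. h (k + n))"
proof -
  have sh': "summable (\<lambda>k. h (k + n))" using sh summable_iff_shift by blast
  have telescope: "\<bar>x n\<bar> \<le> \<bar>x (n + 2 * M)\<bar> + (\<Sum>k<2 * M. h (k + n))" for M
  proof (induction M)
    case (Suc M)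
    have "\<bar>x (n + 2 * M)\<bar> \<le> \<bar>x (n + 2 * Suc M)\<bar> + h (n + 2 * M)"
      using step[of "n + 2 * M"] by (simp add: add.assoc)
    with Suc.IH h0[of "Suc (2 * M) + n"] show ?case by (simp add: add.commute)
  qed simp
  have "\<bar>x n\<bar> - (\<Sum>k. h (k + n)) \<le> \<bar>x (n + 2 * M)\<bar>" for M
    using telescope[of M] sum_le_suminf[OF sh', of "{..<2 * M}"] h0 by fastforce
  moreover have "(\<lambda>M. \<bar>x (n + 2 * M)\<bar>) \<longlonglongrightarrow> 0"
  proof -
    have "strict_mono (\<lambda>M. n + 2 * M)" by (auto simp: strict_mono_def)
    from LIMSEQ_subseq_LIMSEQ[OF lim this] show ?thesis
      using tendsto_rabs_zero by (auto simp: o_def)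
  qed
  ultimately have "\<bar>x n\<bar> - (\<Sum>k. h (k + n)) \<le> 0" by (intro LIMSEQ_le_const) auto
  then show ?thesis by simp
qed

lemma summable_abs_of_backward_contraction:
  fixes e g :: "nat \<Rightarrow> real"
  assumes q: "0 \<le> q" "q < 1"
    and step: "\<And>n. \<bar>e n\<bar> \<le> q * (\<bar>e (Suc n)\<bar> + g n)"
    and g: "summable g" "\<And>n. g n \<ge> 0"
    and bdd: "\<And>n. \<bar>e n\<bar> \<le> K"
  shows "summable (\<lambda>n. \<bar>e n\<bar>)"
proof (rule summableI_nonneg_bounded)
  fix N
  define E where "E = (\<Sum>n<N. \<bar>e n\<bar>)"
  have "E \<le> (\<Sum>n<N. q * (\<bar>e (Suc n)\<bar> + g n))" unfolding E_def by (intro sum_mono step)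
  also have "\<dots> = q * ((\<Sum>n<N. \<bar>e (Suc n)\<bar>) + (\<Sum>n<N. g n))"
    by (simp add: sum.distrib sum_distrib_left distrib_left)
  also have "(\<Sum>n<N. \<bar>e (Suc n)\<bar>) = E - \<bar>e 0\<bar> + \<bar>e N\<bar>"
    unfolding E_def using sum.lessThan_Suc_shift[of "\<lambda>n. \<bar>e n\<bar>" N] by simp
  also have "q * (E - \<bar>e 0\<bar> + \<bar>e N\<bar> + (\<Sum>n<N. g n)) \<le> q * (E + K + suminf g)"
    using bdd[of N] sum_le_suminf[OF g(1), of "{..<N}"] g(2) q(1)
    by (intro mult_left_mono) auto
  finally have "(1 - q) * E \<le> q * (K + suminf g)" by (simp add: algebra_simps)
  then show "(\<Sum>n<N. \<bar>e n\<bar>) \<le> q * (K + suminf g) / (1 - q)"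
    unfolding E_def using q by (simp add: pos_le_divide_eq mult.commute)
qed auto

primrec cfrac :: "(nat \<Rightarrow> real) \<Rightarrow> nat \<Rightarrow> nat \<Rightarrow> real" where
  "cfrac \<beta> 0 n = 0"
| "cfrac \<beta> (Suc k) n = 1 / (\<beta> n - cfrac \<beta> k (Suc n))"

definition cfrac_lim :: "(nat \<Rightarrow> real) \<Rightarrow> nat \<Rightarrow> real" where
  "cfrac_lim \<beta> n = lim (\<lambda>k. cfrac \<beta> k n)"

context
  fixes \<beta> :: "nat \<Rightarrow> real" and c :: real
  assumes c_pos: "c > 0" and \<beta>_ge: "\<And>n. \<beta> n \<ge> 2 + c"
begin

lemma cfrac_bounds: "0 \<le> cfrac \<beta> k n \<and> cfrac \<beta> k n \<le> 1 / (1 + c)"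
proof (induction k arbitrary: n)
  case (Suc k)
  have "1 / (1 + c) \<le> 1" using c_pos by simp
  then have "1 + c \<le> \<beta> n - cfrac \<beta> k (Suc n)"
    using \<beta>_ge[of n] Suc[of "Suc n"] by linarith
  then show ?case using c_pos by (simp add: frac_le)
qed (use c_pos in simp)

lemma cfrac_denominator_ge: "1 + c \<le> \<beta> n - cfrac \<beta> k (Suc n)"
proof -
  have "1 / (1 + c) \<le> 1" using c_pos by simp
  then show ?thesis using \<beta>_ge[of n] cfrac_bounds[of k "Suc n"] by linarith
qed

lemma cfrac_step_le: "\<bar>cfrac \<beta> (Suc k) n - cfrac \<beta> k n\<bar> \<le> (1 / (1 + c)) ^ (2 * k + 1)"
proof (induction k arbitrary: n)
  case 0
  show ?case using cfrac_bounds[of 1 n] by simp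
next
  case (Suc k)
  have "\<bar>cfrac \<beta> (Suc (Suc k)) n - cfrac \<beta> (Suc k) n\<bar>
      = \<bar>1 / (\<beta> n - cfrac \<beta> (Suc k) (Suc n)) - 1 / (\<beta> n - cfrac \<beta> k (Suc n))\<bar>"
    by (simp only: cfrac.simps(2))
  also have "\<dots> \<le> \<bar>(\<beta> n - cfrac \<beta> (Suc k) (Suc n)) - (\<beta> n - cfrac \<beta> k (Suc n))\<bar> / (1 + c)\<^sup>2"
    using c_pos by (intro abs_inverse_diff_le cfrac_denominator_ge) auto
  also have "\<dots> = \<bar>cfrac \<beta> (Suc k) (Suc n) - cfrac \<beta> k (Suc n)\<bar> / (1 + c)\<^sup>2"
    by (simp add: abs_minus_commute)
  also have "\<dots> \<le> (1 / (1 + c)) ^ (2 * k + 1) / (1 + c)\<^sup>2"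
    using Suc[of "Suc n"] by (intro divide_right_mono) auto
  also have "\<dots> = (1 / (1 + c)) ^ (2 * k + 1) * (1 / (1 + c))\<^sup>2" by (simp add: power_divide)
  also have "\<dots> = (1 / (1 + c)) ^ (2 * Suc k + 1)" by (simp flip: power_add)
  finally show ?case .
qed

lemma cfrac_tendsto: "(\<lambda>k. cfrac \<beta> k n) \<longlonglongrightarrow> cfrac_lim \<beta> n"
proof -
  have q: "0 < 1 / (1 + c)" "1 / (1 + c) < 1" using c_pos by auto
  have "summable (\<lambda>k. (1 / (1 + c)) * ((1 / (1 + c))\<^sup>2) ^ k)"
    using q by (intro summable_mult summable_geometric) (simp add: power_less_one_iff)
  then have "summable (\<lambda>k. cfrac \<beta> (Suc k) n - cfrac \<beta> k n)"
  proof (rule summable_comparison_test'[of _ 0])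
    fix k
    show "norm (cfrac \<beta> (Suc k) n - cfrac \<beta> k n) \<le> 1 / (1 + c) * ((1 / (1 + c))\<^sup>2) ^ k"
      using cfrac_step_le[of k n] by (simp add: power_mult[symmetric] mult.commute)
  qed
  then have "convergent (\<lambda>k. \<Sum>j<k. cfrac \<beta> (Suc j) n - cfrac \<beta> j n)"
    by (simp add: summable_iff_convergent)
  then have "convergent (\<lambda>k. cfrac \<beta> k n)"
    by (simp only: sum_lessThan_telescope[of "\<lambda>j. cfrac \<beta> j n"] cfrac.simps(1) diff_zero)
  then show ?thesis unfolding cfrac_lim_def by (simp add: convergent_LIMSEQ_iff)
qed

lemma cfrac_lim_bounds: "0 \<le> cfrac_lim \<beta> n \<and> cfrac_lim \<beta> n \<le> 1 / (1 + c)"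
  using LIMSEQ_le_const[OF cfrac_tendsto] LIMSEQ_le_const2[OF cfrac_tendsto] cfrac_bounds
  by blast

lemma cfrac_lim_denominator_ge: "1 + c \<le> \<beta> n - cfrac_lim \<beta> (Suc n)"
proof -
  have "1 / (1 + c) \<le> 1" using c_pos by simp
  then show ?thesis using \<beta>_ge[of n] cfrac_lim_bounds[of "Suc n"] by linarith
qed

lemma cfrac_lim_eq: "cfrac_lim \<beta> n = 1 / (\<beta> n - cfrac_lim \<beta> (Suc n))"
proof (rule LIMSEQ_unique)
  show "(\<lambda>k. cfrac \<beta> (Suc k) n) \<longlonglongrightarrow> cfrac_lim \<beta> n" using LIMSEQ_Suc[OF cfrac_tendsto] .
  show "(\<lambda>k. cfrac \<beta> (Suc k) n) \<longlonglongrightarrow> 1 / (\<beta> n - cfrac_lim \<beta> (Suc n))"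
    using cfrac_lim_denominator_ge[of n] c_pos
    by (simp only: cfrac.simps) (intro tendsto_intros cfrac_tendsto; simp)
qed

end

locale admissible_potential =
  fixes V :: "nat \<Rightarrow> real" and C :: real
  assumes bounded_V: "bounded (range V)"
    and C_pos: "C > 0"
    and V_ge: "\<And>n. n \<ge> 1 \<Longrightarrow> V n \<ge> C"
    and weighted_variation_summable: "summable (\<lambda>n. \<bar>real n * (V (n + 1) - V n)\<bar>)"
begin

definition Vmax :: real where "Vmax = (SUP n. \<bar>V n\<bar>)"

lemma abs_V_le: "\<bar>V n\<bar> \<le> Vmax"
proof -
  obtain b where "\<forall>x\<in>range V. norm x \<le> b" using bounded_V bounded_iff by metis
  then have "bdd_above (range (\<lambda>n. \<bar>V n\<bar>))" by (auto intro: bdd_aboveI2)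
  then show ?thesis unfolding Vmax_def by (rule cSUP_upper[OF UNIV_I])
qed

lemma C_le_Vmax: "C \<le> Vmax" using V_ge[of 1] abs_V_le[of 1] by simp

lemma variation_summable: "summable (\<lambda>n. \<bar>V (Suc n) - V n\<bar>)"
proof (rule summable_comparison_test'[OF weighted_variation_summable, of 1])
  fix n :: nat assume "1 \<le> n"
  then show "norm \<bar>V (Suc n) - V n\<bar> \<le> \<bar>real n * (V (n + 1) - V n)\<bar>"
    by (simp add: abs_mult mult_le_cancel_right1)
qed

lemma V_tendsto: "V \<longlonglongrightarrow> Vinf V"
proof -
  have "summable (\<lambda>n. V (Suc n) - V n)"
    using variation_summable by (simp add: summable_norm_cancel)
  then obtain l where "(\<lambda>n. \<Sum>j<n. V (Suc j) - V j) \<longlonglongrightarrow> l"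
    unfolding summable_iff_convergent convergent_def by blast
  moreover have "(\<lambda>n. V 0 + (\<Sum>j<n. V (Suc j) - V j)) = V"
    by (rule ext) (simp add: sum_lessThan_telescope)
  ultimately have "V \<longlonglongrightarrow> V 0 + l" by (metis tendsto_add_const_iff)
  then show ?thesis unfolding Vinf_def by (metis limI)
qed

lemma Vinf_ge: "C \<le> Vinf V"
  using V_tendsto by (rule LIMSEQ_le_const) (use V_ge in auto)

definition disc :: "nat \<Rightarrow> real" where "disc n = V n * (V n + 4)"

definition disc_inf :: real where "disc_inf = Vinf V * (Vinf V + 4)"

lemma bb_squared_minus_4: "bb V n ^ 2 - 4 = disc n"
  unfolding bb_def disc_def by (simp add: power2_eq_square algebra_simps)

lemma disc_ge: "n \<ge> 1 \<Longrightarrow> C * (C + 4) \<le> disc n"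
  unfolding disc_def using V_ge[of n] C_pos by (intro mult_mono) auto

lemma disc_pos: "n \<ge> 1 \<Longrightarrow> disc n > 0"
  using disc_ge[of n] C_pos by (meson add_pos_pos less_le_trans mult_pos_pos zero_less_numeral)

lemma disc_inf_pos: "disc_inf > 0"
  unfolding disc_inf_def using Vinf_ge C_pos by simp

lemma disc_tendsto: "disc \<longlonglongrightarrow> disc_inf"
  unfolding disc_def[abs_def] disc_inf_def by (intro tendsto_intros V_tendsto)

lemma abs_disc_diff_le: "\<bar>disc n - disc m\<bar> \<le> (2 * Vmax + 4) * \<bar>V n - V m\<bar>"
proof -
  have "disc n - disc m = (V n - V m) * (V n + V m + 4)" unfolding disc_def by algebra
  then have "\<bar>disc n - disc m\<bar> = \<bar>V n - V m\<bar> * \<bar>V n + V m + 4\<bar>" by (simp add: abs_mult)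
  also have "\<dots> \<le> \<bar>V n - V m\<bar> * (2 * Vmax + 4)"
    using abs_V_le[of n] abs_V_le[of m] by (intro mult_left_mono) auto
  finally show ?thesis by (simp add: mult.commute)
qed

definition ln_disc_lip :: real where "ln_disc_lip = (2 * Vmax + 4) / (C * (C + 4))"

lemma ln_disc_lip_nonneg: "ln_disc_lip \<ge> 0"
  unfolding ln_disc_lip_def using C_le_Vmax C_pos by simp

lemma abs_ln_disc_diff_le:
  assumes "n \<ge> 1" "m \<ge> 1"
  shows "\<bar>ln (disc n) - ln (disc m)\<bar> \<le> ln_disc_lip * \<bar>V n - V m\<bar>"
proof -
  have "\<bar>ln (disc n) - ln (disc m)\<bar> \<le> \<bar>disc n - disc m\<bar> / (C * (C + 4))"
    using C_pos assms by (intro abs_ln_diff_le disc_ge) auto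
  also have "\<dots> \<le> (2 * Vmax + 4) * \<bar>V n - V m\<bar> / (C * (C + 4))"
    using abs_disc_diff_le[of n m] C_pos by (intro divide_right_mono) auto
  finally show ?thesis unfolding ln_disc_lip_def by simp
qed

abbreviation S :: "nat \<Rightarrow> real" where "S \<equiv> SS V"

lemma S_eq: "S n = (V n + 2 + sqrt (disc n)) / 2"
  unfolding SS_def disc_def ..

lemma S_ge: "n \<ge> 1 \<Longrightarrow> 1 + C \<le> S n"
proof -
  assume n: "n \<ge> 1"
  have "V n ^ 2 \<le> disc n" unfolding disc_def using V_ge[OF n] C_pos by (simp add: power2_eq_square)
  then have "V n \<le> sqrt (disc n)" using real_le_rsqrt by blast
  then show ?thesis unfolding S_eq using V_ge[OF n] by simp
qed

lemma S_pos: "n \<ge> 1 \<Longrightarrow> S n > 0" using S_ge[of n] C_pos by simp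

lemma S_le: "S n \<le> Vmax + 2"
proof -
  have "disc n \<le> (V n + 2)\<^sup>2" unfolding disc_def by (simp add: power2_eq_square algebra_simps)
  then have "sqrt (disc n) \<le> \<bar>V n + 2\<bar>" using real_sqrt_le_mono by fastforce
  then show ?thesis unfolding S_eq using abs_V_le[of n] by simp
qed

lemma inverse_S: "n \<ge> 1 \<Longrightarrow> inverse (S n) = V n + 2 - S n"
proof -
  assume n: "n \<ge> 1"
  have "sqrt (disc n) ^ 2 = disc n" using disc_pos[OF n] by simp
  then have "S n * (V n + 2 - S n) = 1" unfolding S_eq disc_def by (simp add: power2_eq_square field_simps)
  then show ?thesis using S_pos[OF n] by (simp add: field_simps)
qed

lemma abs_S_diff_le:
  assumes "n \<ge> 1" "m \<ge> 1"
  shows "\<bar>S n - S m\<bar> \<le> (1 + (2 * Vmax + 4) / sqrt (C * (C + 4))) / 2 * \<bar>V n - V m\<bar>"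
proof -
  have "\<bar>sqrt (disc n) - sqrt (disc m)\<bar> \<le> \<bar>disc n - disc m\<bar> / sqrt (C * (C + 4))"
    using C_pos assms by (intro abs_sqrt_diff_le disc_ge) auto
  also have "\<dots> \<le> (2 * Vmax + 4) / sqrt (C * (C + 4)) * \<bar>V n - V m\<bar>"
    using abs_disc_diff_le[of n m] C_pos by (simp add: divide_right_mono)
  finally have sqrt_diff: "\<bar>sqrt (disc n) - sqrt (disc m)\<bar> \<le> \<dots>" .
  have "S n - S m = ((V n - V m) + (sqrt (disc n) - sqrt (disc m))) / 2"
    unfolding S_eq by (simp add: field_simps)
  then have "\<bar>S n - S m\<bar> = \<bar>(V n - V m) + (sqrt (disc n) - sqrt (disc m))\<bar> / 2"
    by (simp only: abs_divide abs_numeral)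
  also have "\<dots> \<le> (\<bar>V n - V m\<bar> + \<bar>sqrt (disc n) - sqrt (disc m)\<bar>) / 2"
    by (intro divide_right_mono abs_triangle_ineq) auto
  also have "\<dots> \<le> (\<bar>V n - V m\<bar> + (2 * Vmax + 4) / sqrt (C * (C + 4)) * \<bar>V n - V m\<bar>) / 2"
    using sqrt_diff by (intro divide_right_mono add_left_mono) auto
  also have "\<dots> = (1 + (2 * Vmax + 4) / sqrt (C * (C + 4))) / 2 * \<bar>V n - V m\<bar>"
    by (simp add: distrib_right)
  finally show ?thesis .
qed

lemma S_variation_summable: "summable (\<lambda>n. \<bar>S (n + 2) - S (n + 1)\<bar>)"
proof -
  let ?K = "(1 + (2 * Vmax + 4) / sqrt (C * (C + 4))) / 2"
  have "summable (\<lambda>n. ?K * \<bar>V (Suc (n + 1)) - V (n + 1)\<bar>)"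
    using variation_summable summable_iff_shift[of "\<lambda>n. \<bar>V (Suc n) - V n\<bar>" 1] by (intro summable_mult) auto
  then show ?thesis
  proof (rule summable_comparison_test'[of _ 0])
    fix n :: nat
    show "norm \<bar>S (n + 2) - S (n + 1)\<bar> \<le> ?K * \<bar>V (Suc (n + 1)) - V (n + 1)\<bar>"
      using abs_S_diff_le[of "n + 2" "n + 1"] by simp
  qed
qed

lemma ln_Czfac: "ln (Czfac V (Suc m)) = (ln (disc (2 * m + 2)) - ln (disc (2 * m + 1))) / 2"
proof -
  have pos: "disc (2 * m + 2) > 0" "disc (2 * m + 1) > 0" by (intro disc_pos; simp)+
  have "Czfac V (Suc m) = sqrt (disc (2 * m + 2) / disc (2 * m + 1))"
    unfolding Czfac_def disc_def by simp
  then show ?thesis using pos by (simp add: ln_sqrt ln_div)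
qed

lemma Czfac_pos: "Czfac V (Suc m) > 0"
proof -
  have "disc (2 * m + 2) > 0" "disc (2 * m + 1) > 0" by (intro disc_pos; simp)+
  then show ?thesis unfolding Czfac_def disc_def[symmetric] by simp
qed

lemma ln_Czfac_summable: "summable (\<lambda>m. ln (Czfac V (Suc m)))"
proof -
  have "summable (\<lambda>m. \<bar>V (Suc (2 * m + 1)) - V (2 * m + 1)\<bar>)"
    using summable_abs_reindex_strict_mono[OF _ variation_summable, of "\<lambda>m. 2 * m + 1"]
    by (simp add: strict_mono_def)
  then have "summable (\<lambda>m. ln_disc_lip / 2 * \<bar>V (Suc (2 * m + 1)) - V (2 * m + 1)\<bar>)"
    by (rule summable_mult)
  then show ?thesis
  proof (rule summable_comparison_test'[of _ 0])
    fix m :: nat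
    show "norm (ln (Czfac V (Suc m))) \<le> ln_disc_lip / 2 * \<bar>V (Suc (2 * m + 1)) - V (2 * m + 1)\<bar>"
      using abs_ln_disc_diff_le[of "2 * m + 2" "2 * m + 1"] unfolding ln_Czfac by simp
  qed
qed

definition ln_Cz_prod :: real where "ln_Cz_prod = (\<Sum>m. ln (Czfac V (Suc m)))"

lemma Czfac_has_prod: "(\<lambda>m. Czfac V (Suc m)) has_prod exp ln_Cz_prod"
proof -
  have "(\<lambda>m. exp (ln (Czfac V (Suc m)))) has_prod exp ln_Cz_prod"
    unfolding ln_Cz_prod_def using ln_Czfac_summable
    by (simp add: has_prod_def sums_imp_has_prod_exp summable_sums)
  then show ?thesis using Czfac_pos by simp
qed

definition z_inf :: real where "z_inf = disc_inf powr (-1/4)"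

lemma z_inf_pos: "z_inf > 0" unfolding z_inf_def using disc_inf_pos by simp

lemma Cz_eq: "Cz V = z_inf * exp ln_Cz_prod"
  unfolding Cz_def z_inf_def disc_inf_def using has_prod_unique[OF Czfac_has_prod] by simp

lemma Cz_pos: "Cz V > 0" using Cz_eq z_inf_pos by simp

definition disc_prod :: "nat \<Rightarrow> real" where
  "disc_prod n = (\<Prod>k\<in>{k. 1 \<le> k \<and> k \<le> n \<and> k mod 2 = n mod 2}. bb V k ^ 2 - 4)"

lemma disc_prod_pos: "disc_prod n > 0"
  unfolding disc_prod_def bb_squared_minus_4 by (intro prod_pos) (auto intro: disc_pos)

lemma disc_prod_0: "disc_prod 0 = 1"
proof -
  have "{k::nat. 1 \<le> k \<and> k \<le> 0 \<and> k mod 2 = 0 mod 2} = {}" by auto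
  then show ?thesis unfolding disc_prod_def by (simp only: prod.empty)
qed

lemma disc_prod_Suc: "disc_prod (Suc n) = disc (Suc n) * disc_prod (n - 1)"
proof (cases n)
  case 0
  have "{k::nat. 1 \<le> k \<and> k \<le> 1 \<and> k mod 2 = 1 mod 2} = {1}" by auto
  then show ?thesis using 0 disc_prod_0 unfolding disc_prod_def bb_squared_minus_4 by simp
next
  case (Suc p)
  have "{k. 1 \<le> k \<and> k \<le> Suc (Suc p) \<and> k mod 2 = Suc (Suc p) mod 2}
      = insert (Suc (Suc p)) {k. 1 \<le> k \<and> k \<le> p \<and> k mod 2 = p mod 2}"
    by (auto simp: le_Suc_eq) presburger+
  moreover have "finite {k. 1 \<le> k \<and> k \<le> p \<and> k mod 2 = p mod 2}"
    by (rule finite_subset[of _ "{..p}"]) auto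
  ultimately show ?thesis using Suc unfolding disc_prod_def bb_squared_minus_4 by simp
qed

lemma zz_eq: "zz V n = (if even n then Cz V else inverse (Cz V)) * sqrt (disc_prod (n - 1) / disc_prod n)"
  unfolding zz_def disc_prod_def ..

lemma zz_pos: "zz V n > 0"
  unfolding zz_eq using Cz_pos disc_prod_pos[of n] disc_prod_pos[of "n - 1"] by simp

lemma zz_0: "zz V 0 = Cz V"
  unfolding zz_eq by (simp add: disc_prod_0)

lemma zz_mult_zz_Suc: "zz V n * zz V (Suc n) = 1 / sqrt (disc (Suc n))"
proof -
  have Cz: "(if even n then Cz V else inverse (Cz V)) * (if even (Suc n) then Cz V else inverse (Cz V)) = 1"
    using Cz_pos by auto
  have "disc_prod (n - 1) / disc_prod n * (disc_prod n / disc_prod (Suc n)) = 1 / disc (Suc n)"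
    unfolding disc_prod_Suc using disc_prod_pos[of n] disc_prod_pos[of "n - 1"] disc_pos[of "Suc n"]
    by (simp add: field_simps)
  then have "sqrt (disc_prod (n - 1) / disc_prod n) * sqrt (disc_prod n / disc_prod (Suc n))
      = sqrt (1 / disc (Suc n))"
    by (simp only: real_sqrt_mult[symmetric])
  then have "sqrt (disc_prod (n - 1) / disc_prod n) * sqrt (disc_prod n / disc_prod (Suc n))
      = 1 / sqrt (disc (Suc n))"
    by (simp add: real_sqrt_divide)
  with Cz Cz_pos show ?thesis unfolding zz_eq[of n] zz_eq[of "Suc n"] by (simp add: mult_ac)
qed

definition zlog :: "nat \<Rightarrow> real" where "zlog n = ln (zz V n / z_inf)"

lemma zz_eq_exp_zlog: "zz V n = z_inf * exp (zlog n)"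
  unfolding zlog_def using zz_pos[of n] z_inf_pos by simp

lemma zlog_add_zlog_Suc: "zlog n + zlog (Suc n) = - (ln (disc (Suc n)) - ln disc_inf) / 2"
proof -
  have "zlog n + zlog (Suc n) = ln (zz V n * zz V (Suc n)) - 2 * ln z_inf"
    unfolding zlog_def using zz_pos[of n] zz_pos[of "Suc n"] z_inf_pos by (simp add: ln_div ln_mult)
  also have "ln (zz V n * zz V (Suc n)) = - ln (disc (Suc n)) / 2"
    using disc_pos[of "Suc n"] by (simp add: zz_mult_zz_Suc ln_div ln_sqrt)
  also have "ln z_inf = - ln disc_inf / 4" unfolding z_inf_def using disc_inf_pos by (simp add: ln_powr)
  finally show ?thesis by simp
qed

lemma zlog_two_step: "zlog (n + 2) - zlog n = (ln (disc (n + 1)) - ln (disc (n + 2))) / 2"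
  using zlog_add_zlog_Suc[of n] zlog_add_zlog_Suc[of "Suc n"] by (simp add: field_simps)

lemma zlog_even: "zlog (2 * N) = ln_Cz_prod - (\<Sum>m<N. ln (Czfac V (Suc m)))"
proof (induction N)
  case 0
  show ?case using zz_0 Cz_eq z_inf_pos by (simp add: zlog_def)
next
  case (Suc N)
  have "zlog (2 * Suc N) = zlog (2 * N) - ln (Czfac V (Suc N))"
    using zlog_two_step[of "2 * N"] ln_Czfac[of N] by (simp add: field_simps)
  with Suc.IH show ?case by simp
qed

lemma zlog_tendsto: "zlog \<longlonglongrightarrow> 0"
proof (rule LIMSEQ_even_odd)
  have "(\<lambda>N. \<Sum>m<N. ln (Czfac V (Suc m))) \<longlonglongrightarrow> ln_Cz_prod"
    unfolding ln_Cz_prod_def using ln_Czfac_summable by (rule summable_LIMSEQ)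
  then have "(\<lambda>N. ln_Cz_prod - (\<Sum>m<N. ln (Czfac V (Suc m)))) \<longlonglongrightarrow> ln_Cz_prod - ln_Cz_prod"
    by (intro tendsto_diff) auto
  then show even: "(\<lambda>N. zlog (2 * N)) \<longlonglongrightarrow> 0" unfolding zlog_even by simp
  have "strict_mono (\<lambda>N::nat. 2 * N + 1)" by (auto simp: strict_mono_def)
  from LIMSEQ_subseq_LIMSEQ[OF disc_tendsto this]
  have "(\<lambda>N. disc (2 * N + 1)) \<longlonglongrightarrow> disc_inf" by (simp add: o_def)
  then have "(\<lambda>N. ln (disc (2 * N + 1))) \<longlonglongrightarrow> ln disc_inf"
    using disc_inf_pos by (intro tendsto_ln) auto
  from this even
  have "(\<lambda>N. - (ln (disc (2 * N + 1)) - ln disc_inf) / 2 - zlog (2 * N))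
      \<longlonglongrightarrow> - (ln disc_inf - ln disc_inf) / 2 - 0"
    by (intro tendsto_diff tendsto_divide tendsto_minus tendsto_const) auto
  moreover have "zlog (2 * N + 1) = - (ln (disc (2 * N + 1)) - ln disc_inf) / 2 - zlog (2 * N)" for N
    using zlog_add_zlog_Suc[of "2 * N"] by (simp only: Suc_eq_plus1[symmetric])
  ultimately show "(\<lambda>N. zlog (2 * N + 1)) \<longlonglongrightarrow> 0" by simp
qed

lemma zz_tendsto: "zz V \<longlonglongrightarrow> z_inf"
proof -
  have "(\<lambda>n. z_inf * exp (zlog n)) \<longlonglongrightarrow> z_inf * exp 0" by (intro tendsto_intros zlog_tendsto)
  then show ?thesis by (simp flip: zz_eq_exp_zlog add: fun_eq_iff)
qed

definition zvar :: "nat \<Rightarrow> real" where "zvar n = ln_disc_lip / 2 * \<bar>V (n + 2) - V (n + 1)\<bar>"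

lemma zvar_nonneg: "zvar n \<ge> 0" unfolding zvar_def using ln_disc_lip_nonneg by simp

lemma weighted_zvar_summable: "summable (\<lambda>n. real n * zvar n)"
proof -
  have "summable (\<lambda>n. ln_disc_lip / 2 * \<bar>real (n + 1) * (V (n + 1 + 1) - V (n + 1))\<bar>)"
    using weighted_variation_summable summable_iff_shift[of "\<lambda>n. \<bar>real n * (V (n + 1) - V n)\<bar>" 1]
    by (intro summable_mult) simp
  then show ?thesis
  proof (rule summable_comparison_test'[of _ 0])
    fix n :: nat
    have "real n * \<bar>V (n + 2) - V (n + 1)\<bar> \<le> real (n + 1) * \<bar>V (n + 2) - V (n + 1)\<bar>"
      by (intro mult_right_mono) auto
    then have "ln_disc_lip / 2 * (real n * \<bar>V (n + 2) - V (n + 1)\<bar>)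
        \<le> ln_disc_lip / 2 * (real (n + 1) * \<bar>V (n + 2) - V (n + 1)\<bar>)"
      using ln_disc_lip_nonneg by (intro mult_left_mono) auto
    then have "real n * zvar n \<le> ln_disc_lip / 2 * (real (n + 1) * \<bar>V (n + 2) - V (n + 1)\<bar>)"
      unfolding zvar_def by (simp add: mult_ac)
    then show "norm (real n * zvar n) \<le> ln_disc_lip / 2 * \<bar>real (n + 1) * (V (n + 1 + 1) - V (n + 1))\<bar>"
      using zvar_nonneg[of n] by (simp add: abs_mult numeral_2_eq_2)
  qed
qed

lemma zvar_summable: "summable zvar"
proof (rule summable_comparison_test'[OF weighted_zvar_summable, of 1])
  fix n :: nat assume "1 \<le> n"
  then show "norm (zvar n) \<le> real n * zvar n"
    using zvar_nonneg[of n] by (simp add: mult_le_cancel_right1)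
qed

lemma abs_zlog_le_tail: "\<bar>zlog n\<bar> \<le> (\<Sum>k. zvar (k + n))"
proof (rule abs_le_suminf_of_two_step_increments[OF zvar_nonneg zvar_summable _ zlog_tendsto])
  fix n
  show "\<bar>zlog (n + 2) - zlog n\<bar> \<le> zvar n"
    using abs_ln_disc_diff_le[of "n + 1" "n + 2"]
    unfolding zlog_two_step zvar_def by (simp add: abs_minus_commute)
qed

definition zlog_bound :: real where "zlog_bound = (\<Sum>k. zvar k)"

lemma zvar_tail_le: "(\<Sum>k. zvar (k + n)) \<le> zlog_bound"
  using suminf_split_initial_segment[OF zvar_summable, of n] zvar_nonneg
  unfolding zlog_bound_def by (simp add: sum_nonneg)

lemma abs_zlog_le: "\<bar>zlog n\<bar> \<le> zlog_bound"
  using abs_zlog_le_tail zvar_tail_le order_trans by blast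

definition zmin :: real where "zmin = z_inf * exp (- zlog_bound)"
definition zmax :: real where "zmax = z_inf * exp zlog_bound"

lemma zmin_pos: "zmin > 0" unfolding zmin_def using z_inf_pos by simp

lemma zz_ge_zmin: "zmin \<le> zz V n"
  unfolding zmin_def zz_eq_exp_zlog using abs_zlog_le[of n] z_inf_pos by simp

lemma zz_le_zmax: "zz V n \<le> zmax"
  unfolding zmax_def zz_eq_exp_zlog using abs_zlog_le[of n] z_inf_pos by simp

text \<open>Here the weight \<open>n\<close> in the hypothesis on \<open>V\<close> is used: the deviation of \<open>z\<^sub>n\<close> is
  controlled by a tail sum of the variation, and these tails are summable.\<close>

lemma zz_deviation_summable: "summable (\<lambda>n. \<bar>zz V n - z_inf\<bar>)"
proof -
  have "summable (\<lambda>n. z_inf * exp zlog_bound * (\<Sum>k. zvar (k + n)))"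
    using summable_tail_sums[OF zvar_nonneg weighted_zvar_summable] by (rule summable_mult)
  then show ?thesis
  proof (rule summable_comparison_test'[of _ 0])
    fix n :: nat
    have "zz V n - z_inf = z_inf * (exp (zlog n) - 1)"
      unfolding zz_eq_exp_zlog by (simp add: algebra_simps)
    then have "\<bar>zz V n - z_inf\<bar> = z_inf * \<bar>exp (zlog n) - 1\<bar>"
      using z_inf_pos by (simp add: abs_mult)
    also have "\<dots> \<le> z_inf * (exp \<bar>zlog n\<bar> * \<bar>zlog n\<bar>)"
      using abs_exp_minus_one_le z_inf_pos by (intro mult_left_mono) auto
    also have "\<dots> \<le> z_inf * (exp zlog_bound * (\<Sum>k. zvar (k + n)))"
      using abs_zlog_le[of n] abs_zlog_le_tail[of n] z_inf_pos
      by (intro mult_left_mono mult_mono) auto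
    finally show "norm \<bar>zz V n - z_inf\<bar> \<le> z_inf * exp zlog_bound * (\<Sum>k. zvar (k + n))"
      by (simp add: mult.assoc)
  qed
qed

lemma abs_zz_ratio_minus_one_le:
  "\<bar>zz V i / zz V j - 1\<bar> \<le> (\<bar>zz V i - z_inf\<bar> + \<bar>zz V j - z_inf\<bar>) / zmin"
proof -
  have "\<bar>zz V i / zz V j - 1\<bar> = \<bar>zz V i - zz V j\<bar> / zz V j"
    using zz_pos[of j] by (simp add: field_simps)
  also have "\<dots> \<le> (\<bar>zz V i - z_inf\<bar> + \<bar>zz V j - z_inf\<bar>) / zz V j"
    using zz_pos[of j] by (intro divide_right_mono) auto
  also have "\<dots> \<le> (\<bar>zz V i - z_inf\<bar> + \<bar>zz V j - z_inf\<bar>) / zmin"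
    using zmin_pos zz_ge_zmin[of j] by (intro divide_left_mono) auto
  finally show ?thesis .
qed

lemma Vt_minus_V:
  "Vt V (n + 1) - V (n + 1) = (zz V (n + 2) / zz V (n + 1) - 1) * S (n + 2) + (S (n + 2) - S (n + 1))
     + (zz V n / zz V (n + 1) - 1) * inverse (S (n + 1))"
proof -
  have "Vt V (n + 1) = zz V (n + 2) / zz V (n + 1) * S (n + 2)
      + zz V n / zz V (n + 1) * inverse (S (n + 1)) - 2"
    unfolding Vt_def by (simp add: divide_inverse mult_ac)
  moreover have "inverse (S (n + 1)) = V (n + 1) + 2 - S (n + 1)" using inverse_S[of "n + 1"] by simp
  ultimately show ?thesis by (simp add: algebra_simps)
qed

lemma Vt_deviation_summable: "summable (\<lambda>n. \<bar>Vt V (n + 1) - V (n + 1)\<bar>)"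
proof -
  define \<delta> where "\<delta> n = \<bar>zz V n - z_inf\<bar>" for n
  have \<delta>: "summable \<delta>" unfolding \<delta>_def by (rule zz_deviation_summable)
  then have \<delta>_shift: "summable (\<lambda>n. \<delta> (n + k))" for k by (simp only: summable_iff_shift)
  define g where "g n = (Vmax + 2) * ((\<delta> (n + 2) + \<delta> (n + 1)) / zmin)
      + \<bar>S (n + 2) - S (n + 1)\<bar> + (\<delta> n + \<delta> (n + 1)) / zmin" for n
  have "summable g"
    unfolding g_def by (intro summable_add summable_mult summable_divide \<delta> \<delta>_shift S_variation_summable)
  then show ?thesis
  proof (rule summable_comparison_test'[of _ 0])
    fix n :: nat
    have S_ratio: "\<bar>(zz V (n + 2) / zz V (n + 1) - 1) * S (n + 2)\<bar>
        \<le> (Vmax + 2) * ((\<delta> (n + 2) + \<delta> (n + 1)) / zmin)"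
    proof -
      have "\<bar>(zz V (n + 2) / zz V (n + 1) - 1) * S (n + 2)\<bar>
          = \<bar>zz V (n + 2) / zz V (n + 1) - 1\<bar> * S (n + 2)"
        using S_pos[of "n + 2"] by (simp add: abs_mult)
      also have "\<dots> \<le> ((\<delta> (n + 2) + \<delta> (n + 1)) / zmin) * (Vmax + 2)"
        unfolding \<delta>_def using abs_zz_ratio_minus_one_le S_pos[of "n + 2"] S_le[of "n + 2"] zmin_pos
        by (intro mult_mono) auto
      finally show ?thesis by (simp add: mult.commute)
    qed
    have inverse_S_ratio: "\<bar>(zz V n / zz V (n + 1) - 1) * inverse (S (n + 1))\<bar>
        \<le> (\<delta> n + \<delta> (n + 1)) / zmin"
    proof -
      have "inverse (S (n + 1)) \<le> 1" using S_ge[of "n + 1"] C_pos by (simp add: inverse_le_1_iff)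
      then have "\<bar>(zz V n / zz V (n + 1) - 1) * inverse (S (n + 1))\<bar>
          \<le> \<bar>zz V n / zz V (n + 1) - 1\<bar> * 1"
        using S_pos[of "n + 1"] by (simp add: abs_mult mult_left_le)
      also have "\<dots> \<le> (\<delta> n + \<delta> (n + 1)) / zmin"
        unfolding \<delta>_def using abs_zz_ratio_minus_one_le by simp
      finally show ?thesis .
    qed
    have "\<bar>Vt V (n + 1) - V (n + 1)\<bar> \<le> \<bar>(zz V (n + 2) / zz V (n + 1) - 1) * S (n + 2)\<bar>
        + \<bar>S (n + 2) - S (n + 1)\<bar> + \<bar>(zz V n / zz V (n + 1) - 1) * inverse (S (n + 1))\<bar>"
      unfolding Vt_minus_V by (rule order_trans[OF abs_triangle_ineq add_right_mono[OF abs_triangle_ineq]])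
    then show "norm \<bar>Vt V (n + 1) - V (n + 1)\<bar> \<le> g n"
      using S_ratio inverse_S_ratio unfolding g_def by simp
  qed
qed

lemma Vt_tendsto: "Vt V \<longlonglongrightarrow> Vinf V"
proof -
  have "(\<lambda>n. Vt V (n + 1) - V (n + 1)) \<longlonglongrightarrow> 0"
    using summable_LIMSEQ_zero[OF Vt_deviation_summable] by (simp only: tendsto_rabs_zero_iff)
  then have "(\<lambda>n. (Vt V (n + 1) - V (n + 1)) + V (n + 1)) \<longlonglongrightarrow> 0 + Vinf V"
    using LIMSEQ_ignore_initial_segment[OF V_tendsto, of 1] by (rule tendsto_add)
  then have "(\<lambda>n. Vt V (Suc n)) \<longlonglongrightarrow> Vinf V" by simp
  then show ?thesis by (rule LIMSEQ_imp_Suc)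
qed

lemma prod_inverse_S_le_one:
  assumes "\<And>l. l \<in> A \<Longrightarrow> l \<ge> 1"
  shows "0 \<le> (\<Prod>l\<in>A. inverse (S l)) \<and> (\<Prod>l\<in>A. inverse (S l)) \<le> 1"
proof -
  have S: "1 \<le> S l" if "l \<in> A" for l using S_ge[of l] assms[OF that] C_pos by linarith
  show ?thesis
  proof
    show "0 \<le> (\<Prod>l\<in>A. inverse (S l))" using S by (intro prod_nonneg) force
    show "(\<Prod>l\<in>A. inverse (S l)) \<le> 1" using S by (intro prod_le_1) (force simp: inverse_le_1_iff)+
  qed
qed

lemma phip_mult_phim:
  assumes "i \<le> j"
  shows "phip V i * phim V j = zz V i * zz V j * (\<Prod>l=i+1..j. inverse (S l))"
proof -
  have split: "(\<Prod>l=1..j. inverse (S l)) = (\<Prod>l=1..i. inverse (S l)) * (\<Prod>l=i+1..j. inverse (S l))"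
    using prod.ub_add_nat[of 1 i "\<lambda>l. inverse (S l)" "j - i"] assms by simp
  have "(\<Prod>l=1..i. S l) * (\<Prod>l=1..i. inverse (S l)) = (\<Prod>l=1..i. S l * inverse (S l))"
    by (simp add: prod.distrib)
  also have "\<dots> = 1" using S_pos by (intro prod.neutral) (simp add: less_imp_neq[symmetric])
  finally show ?thesis unfolding phip_def phim_def split by (simp add: mult_ac)
qed

lemma abs_green_le:
  assumes "i \<le> j"
  shows "\<bar>phip V i * phim V j\<bar> \<le> zmax\<^sup>2"
proof -
  have p: "0 \<le> (\<Prod>l=i+1..j. inverse (S l))" "(\<Prod>l=i+1..j. inverse (S l)) \<le> 1"
    using prod_inverse_S_le_one[of "{i+1..j}"] by auto
  have "\<bar>phip V i * phim V j\<bar> = zz V i * zz V j * (\<Prod>l=i+1..j. inverse (S l))"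
    unfolding phip_mult_phim[OF assms] using zz_pos[of i] zz_pos[of j] p by simp
  also have "\<dots> \<le> zz V i * zz V j"
    using zz_pos[of i] zz_pos[of j] p by (simp add: mult_left_le)
  also have "\<dots> \<le> zmax\<^sup>2"
    unfolding power2_eq_square using zz_pos zz_le_zmax order_trans[OF less_imp_le[OF zz_pos] zz_le_zmax]
    by (intro mult_mono) (auto intro: less_imp_le)
  finally show ?thesis .
qed

text \<open>The coefficient \<open>b\<^sub>n\<close>, cut off below so that the continued fraction is also defined
  at \<open>n = 0\<close>, where \<open>V\<close> is unconstrained; for \<open>n \<ge> 1\<close> the cut-off is inactive.\<close>

definition beta :: "nat \<Rightarrow> real" where "beta n = max (V n + 2) (2 + C)"

lemma beta_ge: "2 + C \<le> beta n" unfolding beta_def by simp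

lemma beta_le: "beta n \<le> Vmax + 2" unfolding beta_def using abs_V_le[of n] C_le_Vmax by simp

lemma beta_eq: "n \<ge> 1 \<Longrightarrow> beta n = V n + 2" unfolding beta_def using V_ge[of n] by simp

definition ratio :: "nat \<Rightarrow> real" where "ratio = cfrac_lim beta"

lemma ratio_le: "ratio n \<le> 1 / (1 + C)"
  unfolding ratio_def using cfrac_lim_bounds[where \<beta> = beta and c = C, OF C_pos beta_ge] by blast

lemma ratio_denominator_ge: "1 + C \<le> beta n - ratio (Suc n)"
  unfolding ratio_def by (rule cfrac_lim_denominator_ge[where \<beta> = beta and c = C, OF C_pos beta_ge])

lemma ratio_eq: "ratio n = 1 / (beta n - ratio (Suc n))"
  unfolding ratio_def by (rule cfrac_lim_eq[where \<beta> = beta and c = C, OF C_pos beta_ge])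

lemma ratio_ge: "1 / (Vmax + 2) \<le> ratio n"
proof -
  have "0 \<le> ratio (Suc n)"
    unfolding ratio_def using cfrac_lim_bounds[where \<beta> = beta and c = C, OF C_pos beta_ge] by blast
  then have "beta n - ratio (Suc n) \<le> Vmax + 2" using beta_le[of n] by linarith
  then show ?thesis
    using ratio_denominator_ge[of n] C_pos by (subst ratio_eq) (simp add: frac_le)
qed

lemma ratio_pos: "ratio n > 0"
proof -
  have "0 < 1 / (Vmax + 2)" using C_le_Vmax C_pos by simp
  then show ?thesis using ratio_ge[of n] by linarith
qed

lemma inverse_S_fixed_point: "n \<ge> 1 \<Longrightarrow> inverse (S n) = 1 / (beta n - inverse (S n))"
  using inverse_S[of n] beta_eq[of n] by (simp add: divide_inverse)

lemma inverse_S_ge: "n \<ge> 1 \<Longrightarrow> 1 / (Vmax + 2) \<le> inverse (S n)"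
  using S_pos[of n] S_le[of n] by (simp add: inverse_eq_divide frac_le)

text \<open>Both \<open>ratio\<close> and \<open>1/S\<close> are fixed by \<open>x \<mapsto> 1/(b\<^sub>n - x)\<close> (the former with shifted
  argument), a contraction with constant \<open>1/(1+C)\<close>; so their difference at \<open>n\<close> is controlled by
  the difference at \<open>n + 1\<close> plus the variation of \<open>1/S\<close>.\<close>

lemma ratio_deviation_step:
  assumes "n \<ge> 1"
  shows "\<bar>ratio n - inverse (S n)\<bar>
    \<le> 1 / (1 + C) * (\<bar>ratio (Suc n) - inverse (S (Suc n))\<bar> + \<bar>inverse (S (Suc n)) - inverse (S n)\<bar>)"
proof -
  have S_denominator: "1 + C \<le> beta n - inverse (S n)"
    using inverse_S[OF assms] beta_eq[OF assms] S_ge[OF assms] by simp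
  have "\<bar>ratio n - inverse (S n)\<bar> = \<bar>1 / (beta n - ratio (Suc n)) - 1 / (beta n - inverse (S n))\<bar>"
    using ratio_eq[of n] inverse_S_fixed_point[OF assms] by simp
  also have "\<dots> \<le> \<bar>(beta n - ratio (Suc n)) - (beta n - inverse (S n))\<bar> / (1 + C)\<^sup>2"
    using C_pos ratio_denominator_ge[of n] S_denominator by (intro abs_inverse_diff_le) auto
  also have "\<dots> = \<bar>ratio (Suc n) - inverse (S n)\<bar> / (1 + C)\<^sup>2"
    by (simp add: abs_minus_commute)
  also have "\<dots> \<le> \<bar>ratio (Suc n) - inverse (S n)\<bar> / (1 + C)"
    using C_pos by (intro divide_left_mono) (auto simp: power2_eq_square)
  also have "\<dots> \<le> (\<bar>ratio (Suc n) - inverse (S (Suc n))\<bar> + \<bar>inverse (S (Suc n)) - inverse (S n)\<bar>) / (1 + C)"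
    using C_pos by (intro divide_right_mono) auto
  finally show ?thesis by simp
qed

lemma ratio_deviation_summable: "summable (\<lambda>n. \<bar>ratio (Suc n) - inverse (S (Suc n))\<bar>)"
proof (rule summable_abs_of_backward_contraction)
  show "0 \<le> 1 / (1 + C)" "1 / (1 + C) < 1" using C_pos by auto
  show "\<bar>ratio (Suc n) - inverse (S (Suc n))\<bar>
      \<le> 1 / (1 + C) * (\<bar>ratio (Suc (Suc n)) - inverse (S (Suc (Suc n)))\<bar>
        + \<bar>inverse (S (n + 2)) - inverse (S (n + 1))\<bar>)" for n
    using ratio_deviation_step[of "Suc n"] by (simp add: numeral_2_eq_2)
  show "\<bar>ratio (Suc n) - inverse (S (Suc n))\<bar> \<le> 1 + 1" for n
  proof -
    have "1 / (1 + C) \<le> 1" "0 < inverse (S (Suc n))" "inverse (S (Suc n)) \<le> 1"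
      using C_pos S_ge[of "Suc n"] S_pos[of "Suc n"] by (auto simp: inverse_le_1_iff)
    then show ?thesis using ratio_pos[of "Suc n"] ratio_le[of "Suc n"] unfolding abs_le_iff by linarith
  qed
  show "summable (\<lambda>n. \<bar>inverse (S (n + 2)) - inverse (S (n + 1))\<bar>)"
  proof (rule summable_comparison_test'[OF S_variation_summable, of 0])
    fix n :: nat
    have "\<bar>1 / S (n + 2) - 1 / S (n + 1)\<bar> \<le> \<bar>S (n + 2) - S (n + 1)\<bar> / (1 + C)\<^sup>2"
      using C_pos by (intro abs_inverse_diff_le S_ge) auto
    also have "\<dots> \<le> \<bar>S (n + 2) - S (n + 1)\<bar> / 1"
      using C_pos mult_mono[of 1 "1 + C" 1 "1 + C"] by (intro divide_left_mono) (auto simp: power2_eq_square)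
    finally show "norm \<bar>inverse (S (n + 2)) - inverse (S (n + 1))\<bar> \<le> \<bar>S (n + 2) - S (n + 1)\<bar>"
      by (simp add: inverse_eq_divide)
  qed
qed auto

lemma ln_ratio_S_summable: "summable (\<lambda>n. ln (ratio (Suc n) * S (Suc n)))"
proof (rule summable_comparison_test'[OF summable_mult[OF ratio_deviation_summable, of "Vmax + 2"], of 0])
  fix n :: nat
  have "ln (ratio (Suc n) * S (Suc n)) = ln (ratio (Suc n)) - ln (inverse (S (Suc n)))"
    using ln_mult_pos[OF ratio_pos S_pos, of "Suc n" "Suc n"] by (simp add: ln_inverse)
  moreover have "\<bar>ln (ratio (Suc n)) - ln (inverse (S (Suc n)))\<bar>
      \<le> \<bar>ratio (Suc n) - inverse (S (Suc n))\<bar> / (1 / (Vmax + 2))"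
    using C_le_Vmax C_pos by (intro abs_ln_diff_le ratio_ge inverse_S_ge) auto
  ultimately show "norm (ln (ratio (Suc n) * S (Suc n))) \<le> (Vmax + 2) * \<bar>ratio (Suc n) - inverse (S (Suc n))\<bar>"
    by (simp add: mult.commute)
qed

definition ln_ratio_S_prod :: real where "ln_ratio_S_prod = (\<Sum>n. ln (ratio (Suc n) * S (Suc n)))"

text \<open>The normalisation makes \<open>psi\<^sub>n / phim\<^sub>n \<longrightarrow> 1\<close>.\<close>

definition psi :: "nat \<Rightarrow> real" where
  "psi n = z_inf * exp (- ln_ratio_S_prod) * (\<Prod>l=1..n. ratio l)"

lemma psi_Suc: "psi (Suc n) = psi n * ratio (Suc n)"
  unfolding psi_def by (simp add: prod.nat_ivl_Suc' mult_ac)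

lemma psi_solves: "n \<ge> 1 \<Longrightarrow> - psi (n + 1) - psi (n - 1) + (2 + V n) * psi n = 0"
proof -
  assume "n \<ge> 1"
  then obtain p where p: "n = Suc p" by (cases n) auto
  have "ratio (Suc p) * (V (Suc p) + 2 - ratio (Suc (Suc p))) = 1"
    using ratio_eq[of "Suc p"] ratio_denominator_ge[of "Suc p"] beta_eq[of "Suc p"] C_pos by simp
  then show ?thesis unfolding p using psi_Suc[of p] psi_Suc[of "Suc p"] by (simp add: algebra_simps)
qed

lemma psi_div_phim:
  "psi n / phim V n = z_inf * exp (- ln_ratio_S_prod) * exp (\<Sum>l=1..n. ln (ratio l * S l)) / zz V n"
proof -
  have "(\<Prod>l=1..n. inverse (S l)) = inverse (\<Prod>l=1..n. S l)"
    using prod_inversef[of S "{1..n}"] by (simp add: o_def)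
  moreover have "(\<Prod>l=1..n. ratio l) * (\<Prod>l=1..n. S l) = exp (\<Sum>l=1..n. ln (ratio l * S l))"
    using ratio_pos S_pos by (simp add: exp_sum prod.distrib[symmetric])
  ultimately show ?thesis
    unfolding psi_def phim_def by (simp add: divide_inverse mult_ac)
qed

lemma psi_div_phim_tendsto: "(\<lambda>n. psi n / phim V n) \<longlonglongrightarrow> 1"
proof -
  have "(\<lambda>n. \<Sum>j<n. ln (ratio (Suc j) * S (Suc j))) \<longlonglongrightarrow> ln_ratio_S_prod"
    unfolding ln_ratio_S_prod_def using ln_ratio_S_summable by (rule summable_LIMSEQ)
  then have "(\<lambda>n. \<Sum>l=1..n. ln (ratio l * S l)) \<longlonglongrightarrow> ln_ratio_S_prod"
    by (simp add: sum.atLeast1_atMost_eq)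
  then have "(\<lambda>n. z_inf * exp (- ln_ratio_S_prod) * exp (\<Sum>l=1..n. ln (ratio l * S l)) / zz V n)
      \<longlonglongrightarrow> z_inf * exp (- ln_ratio_S_prod) * exp ln_ratio_S_prod / z_inf"
    using z_inf_pos by (intro tendsto_intros zz_tendsto) auto
  then show ?thesis unfolding psi_div_phim using z_inf_pos by (simp add: exp_minus field_simps)
qed

lemma phim_pos: "phim V n > 0"
  unfolding phim_def using zz_pos S_pos by (intro mult_pos_pos prod_pos) auto

lemma phim_le_tail_sup: "phim V n \<le> (SUP k\<in>{n..}. \<bar>phim V k\<bar>)"
proof -
  have "phim V k \<le> zmax" for k
  proof -
    have "phim V k \<le> zz V k"
      unfolding phim_def using prod_inverse_S_le_one[of "{1..k}"] zz_pos[of k] by (simp add: mult_left_le)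
    then show ?thesis using zz_le_zmax[of k] by linarith
  qed
  then have "bdd_above ((\<lambda>k. \<bar>phim V k\<bar>) ` {n..})"
    using phim_pos by (intro bdd_aboveI[of _ zmax]) (auto simp: abs_of_pos)
  then show ?thesis using phim_pos[of n] cSUP_upper[of n "{n..}" "\<lambda>k. \<bar>phim V k\<bar>"] by simp
qed

lemma decaying_solution:
  "\<exists>\<psi> r :: nat \<Rightarrow> real.
     (\<forall>n\<ge>1. - \<psi> (n + 1) - \<psi> (n - 1) + (2 + V n) * \<psi> n = 0)
     \<and> (\<forall>n\<ge>1. \<psi> n = phim V n + r n * (SUP k\<in>{n..}. \<bar>phim V k\<bar>))
     \<and> (r \<longlonglongrightarrow> 0)"
proof -
  define M where "M n = (SUP k\<in>{n..}. \<bar>phim V k\<bar>)" for n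
  have M_pos: "M n > 0" for n using phim_le_tail_sup[of n] phim_pos[of n] unfolding M_def by linarith
  define r where "r n = (psi n - phim V n) / M n" for n
  have bound: "norm (r n) \<le> \<bar>psi n / phim V n - 1\<bar>" for n
  proof -
    have "phim V n \<noteq> 0" using phim_pos[of n] by simp
    then have ratio_minus_one: "psi n / phim V n - 1 = (psi n - phim V n) / phim V n"
      by (simp only: diff_divide_distrib divide_self_if if_False)
    have "norm (r n) = \<bar>psi n - phim V n\<bar> / M n" unfolding r_def using M_pos[of n] by simp
    also have "\<dots> \<le> \<bar>psi n - phim V n\<bar> / phim V n"
      using phim_pos[of n] phim_le_tail_sup[of n] unfolding M_def by (intro divide_left_mono) auto
    also have "\<dots> = \<bar>psi n / phim V n - 1\<bar>"
      unfolding ratio_minus_one by (simp only: abs_divide abs_of_pos[OF phim_pos])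
    finally show ?thesis .
  qed
  have "(\<lambda>n. psi n / phim V n - 1) \<longlonglongrightarrow> 0"
    using tendsto_diff[OF psi_div_phim_tendsto tendsto_const[of 1]] by simp
  then have "(\<lambda>n. \<bar>psi n / phim V n - 1\<bar>) \<longlonglongrightarrow> 0" by (rule tendsto_rabs_zero)
  then have "r \<longlonglongrightarrow> 0" by (rule Lim_null_comparison[OF always_eventually[OF allI[OF bound]]])
  moreover have "psi n = phim V n + r n * M n" for n unfolding r_def using M_pos[of n] by simp
  ultimately show ?thesis unfolding M_def using psi_solves by blast
qed

end

theorem theorem5:
  fixes V :: "nat \<Rightarrow> real" and C :: real
  assumes bdd: "bounded (range V)"
    and Cpos: "C > 0"
    and lower: "\<And>n. n \<ge> 1 \<Longrightarrow> V n \<ge> C"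
    and l1: "summable (\<lambda>n. \<bar>real n * (V (n + 1) - V n)\<bar>)"
  shows
    "summable (\<lambda>n. \<bar>SS V (n + 2) - SS V (n + 1)\<bar>)
     \<and> (V \<longlonglongrightarrow> Vinf V) \<and> Vinf V \<noteq> 0
     \<and> (\<exists>P. (\<lambda>m. Czfac V (Suc m)) has_prod P \<and> P \<noteq> 0)
     \<and> (\<forall>n\<ge>1. zz V n * zz V (n + 1) = 1 / sqrt (V (n + 1) * (V (n + 1) + 4)))
     \<and> summable (\<lambda>m. \<bar>zz V (m + 1) - (Vinf V * (Vinf V + 4)) powr (-1/4)\<bar>)
     \<and> (Vt V \<longlonglongrightarrow> Vinf V)
     \<and> (\<exists>B. \<forall>m\<ge>1. \<forall>n\<ge>1. \<bar>phip V (min m n) * phim V (max m n)\<bar> \<le> B)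
     \<and> (\<exists>B. \<forall>n\<ge>1. \<bar>phip V n * phim V n\<bar> \<le> B)
     \<and> summable (\<lambda>n. \<bar>Vt V (n + 1) - V (n + 1)\<bar>)
     \<and> (\<exists>\<psi> r :: nat \<Rightarrow> real.
          (\<forall>n\<ge>1. - \<psi> (n + 1) - \<psi> (n - 1) + (2 + V n) * \<psi> n = 0)
          \<and> (\<forall>n\<ge>1. \<psi> n = phim V n + r n * (SUP k\<in>{n..}. \<bar>phim V k\<bar>))
          \<and> (r \<longlonglongrightarrow> 0))"
proof -
  interpret admissible_potential V C using assms by unfold_locales
  have "Vinf V \<noteq> 0" using Vinf_ge Cpos by simp
  moreover have "\<exists>P. (\<lambda>m. Czfac V (Suc m)) has_prod P \<and> P \<noteq> 0" using Czfac_has_prod by auto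
  moreover have "\<forall>n\<ge>1. zz V n * zz V (n + 1) = 1 / sqrt (V (n + 1) * (V (n + 1) + 4))"
    using zz_mult_zz_Suc by (simp add: disc_def)
  moreover have "summable (\<lambda>m. \<bar>zz V (m + 1) - (Vinf V * (Vinf V + 4)) powr (-1/4)\<bar>)"
    using zz_deviation_summable summable_iff_shift[of "\<lambda>n. \<bar>zz V n - z_inf\<bar>" 1]
    unfolding z_inf_def disc_inf_def by simp
  moreover have "\<exists>B. \<forall>m\<ge>1. \<forall>n\<ge>1. \<bar>phip V (min m n) * phim V (max m n)\<bar> \<le> B"
    using abs_green_le by (intro exI[of _ "zmax\<^sup>2"]) simp
  moreover have "\<exists>B. \<forall>n\<ge>1. \<bar>phip V n * phim V n\<bar> \<le> B"
    using abs_green_le by (intro exI[of _ "zmax\<^sup>2"]) simp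
  ultimately show ?thesis
    using S_variation_summable V_tendsto Vt_tendsto Vt_deviation_summable decaying_solution
    by (intro conjI) assumption+
qed

end
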